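(* Let $\Phi$ be a Leonard system in $\mathcal A$ with parameter array $(\theta_i,\theta^*_i,i=0..d;\varphi_j,\phi_j,j=1..d)$ and scalars $k_i$ as defined below. Then $$k_i=\frac{\varphi_1\varphi_2\cdots\varphi_i}{\phi_1\phi_2\cdots\phi_i}\cdot\frac{\eta^*_d(\theta^*_0)}{\tau^*_i(\theta^*_i)\,\eta^*_{d-i}(\theta^*_i)}\qquad(0\le i\le d).$$
   Context: Let $\mathbb K$ be a field, $d\ge 0$ an integer, and $\mathcal A$ a $\mathbb K$-algebra isomorphic to $\mathrm{Mat}_{d+1}(\mathbb K)$, with identity $I$ and trace $\mathrm{tr}$. An element $A\in\mathcal A$ is multiplicity-free if it has $d+1$ mutually distinct eigenvalues in $\mathbb K$; if $\theta_0,\dots,\theta_d$ is an ordering of them, the primitive idempotent of $A$ associated with $\theta_i$ is $E_i=\prod_{j\ne i}(A-\theta_jI)/(\theta_i-\theta_j)$. A Leonard system in $\mathcal A$ is a sequence $\Phi=(A;A^*;\{E_i\}_{i=0}^d;\{E^*_i\}_{i=0}^d)$ such that: (i) $A,A^*$ are multiplicity-free; (ii) $E_0,\dots,E_d$ is an ordering of the primitive idempotents of $A$; (iii) $E^*_0,\dots,E^*_d$ is an ordering of those of $A^*$; (iv) $E_iA^*E_j=0$ if $|i-j|>1$ and $\ne0$ if $|i-j|=1$ $(0\le i,j\le d)$; (v) $E^*_iAE^*_j=0$ if $|i-j|>1$ and $\neq0$ if $|i-j|=1$ $(0\le i,j\le d)$. $\theta_i$ (resp. $\theta^*_i$) is the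 eigenvalue of $A$ (resp. $A^*$) for $E_i$ (resp. $E^*_i$). Define $\nu=\mathrm{tr}(E_0E^*_0)^{-1}$ (the trace is nonzero) and $k_i=\nu\,\mathrm{tr}(E^*_iE_0)$ $(0\le i\le d)$. It is known that there exist unique nonzero scalars $\varphi_1,\dots,\varphi_d\in\mathbb K$ (first split sequence) such that for some $\mathbb K$-algebra isomorphism $\natural:\mathcal A\to\mathrm{Mat}_{d+1}(\mathbb K)$, $A^\natural$ is lower bidiagonal with diagonal $\theta_0,\dots,\theta_d$ and subdiagonal entries all $1$, and $A^{*\natural}$ is upper bidiagonal with diagonal $\theta^*_0,\dots,\theta^*_d$ and $(A^{*\natural})_{i-1,i}=\varphi_i$. The second split sequence $\phi_1,\dots,\phi_d$ is the first split sequence of $(A;A^*;\{E_{d-i}\}_{i=0}^d;\{E^*_i\}_{i=0}^d)$. Polynomials: $\tau^*_i=\prod_{h=0}^{i-1}(\lambda-\theta^*_h)$, $\eta^*_i=\prod_{h=0}^{i-1}(\lambda-\theta^*_{d-h})$. Empty products equal $1$. *)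

theory Defs
  imports "Jordan_Normal_Form.Char_Poly"
begin

text \<open>We take the algebra to be Mat_{d+1}(K) itself (n = d+1).\<close>

definition mult_free :: "nat \<Rightarrow> 'a::field mat \<Rightarrow> bool" where
  "mult_free d A \<longleftrightarrow> A \<in> carrier_mat (Suc d) (Suc d) \<and> card {k. eigenvalue A k} = Suc d"

definition eig_ordering :: "nat \<Rightarrow> 'a::field mat \<Rightarrow> (nat \<Rightarrow> 'a) \<Rightarrow> bool" where
  "eig_ordering d A th \<longleftrightarrow> bij_betw th {..d} {k. eigenvalue A k}"

definition prim_idem :: "nat \<Rightarrow> (nat \<Rightarrow> 'a::field) \<Rightarrow> 'a mat \<Rightarrow> nat \<Rightarrow> 'a mat" where
  "prim_idem d th A i =
     foldr (\<lambda>j M. ((1 / (th i - th j)) \<cdot>\<^sub>m (A - th j \<cdot>\<^sub>m 1\<^sub>m (Suc d))) * M)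
           (filter (\<lambda>j. j \<noteq> i) [0..<Suc d]) (1\<^sub>m (Suc d))"

definition idem_ordering :: "nat \<Rightarrow> 'a::field mat \<Rightarrow> (nat \<Rightarrow> 'a mat) \<Rightarrow> bool" where
  "idem_ordering d A E \<longleftrightarrow>
     (\<exists>th. eig_ordering d A th \<and> (\<forall>i\<le>d. E i = prim_idem d th A i))"

definition tridiag_cond :: "nat \<Rightarrow> (nat \<Rightarrow> 'a::field mat) \<Rightarrow> 'a mat \<Rightarrow> bool" where
  "tridiag_cond d E B \<longleftrightarrow>
     (\<forall>i\<le>d. \<forall>j\<le>d.
        (i > j + 1 \<or> j > i + 1 \<longrightarrow> E i * B * E j = 0\<^sub>m (Suc d) (Suc d)) \<and>
        (i = j + 1 \<or> j = i + 1 \<longrightarrow> E i * B * E j \<noteq> 0\<^sub>m (Suc d) (Suc d)))"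

definition leonard_system ::
  "nat \<Rightarrow> 'a::field mat \<Rightarrow> 'a mat \<Rightarrow> (nat \<Rightarrow> 'a mat) \<Rightarrow> (nat \<Rightarrow> 'a mat) \<Rightarrow> bool" where
  "leonard_system d A As E Es \<longleftrightarrow>
     mult_free d A \<and> mult_free d As \<and>
     idem_ordering d A E \<and> idem_ordering d As Es \<and>
     tridiag_cond d E As \<and> tridiag_cond d Es A"

definition alg_iso :: "nat \<Rightarrow> ('a::field mat \<Rightarrow> 'a mat) \<Rightarrow> bool" where
  "alg_iso d h \<longleftrightarrow>
     bij_betw h (carrier_mat (Suc d) (Suc d)) (carrier_mat (Suc d) (Suc d)) \<and>
     (\<forall>X\<in>carrier_mat (Suc d) (Suc d). \<forall>Y\<in>carrier_mat (Suc d) (Suc d).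
        h (X + Y) = h X + h Y \<and> h (X * Y) = h X * h Y) \<and>
     (\<forall>c. \<forall>X\<in>carrier_mat (Suc d) (Suc d). h (c \<cdot>\<^sub>m X) = c \<cdot>\<^sub>m h X) \<and>
     h (1\<^sub>m (Suc d)) = 1\<^sub>m (Suc d)"

definition lower_bidiag :: "nat \<Rightarrow> (nat \<Rightarrow> 'a::field) \<Rightarrow> 'a mat" where
  "lower_bidiag d th = mat (Suc d) (Suc d)
     (\<lambda>(r, c). if r = c then th r else if r = c + 1 then 1 else 0)"

definition upper_bidiag :: "nat \<Rightarrow> (nat \<Rightarrow> 'a::field) \<Rightarrow> (nat \<Rightarrow> 'a) \<Rightarrow> 'a mat" where
  "upper_bidiag d ths ph = mat (Suc d) (Suc d)
     (\<lambda>(r, c). if r = c then ths r else if c = r + 1 then ph c else 0)"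

definition split_seq ::
  "nat \<Rightarrow> 'a::field mat \<Rightarrow> 'a mat \<Rightarrow> (nat \<Rightarrow> 'a) \<Rightarrow> (nat \<Rightarrow> 'a) \<Rightarrow> (nat \<Rightarrow> 'a) \<Rightarrow> bool" where
  "split_seq d A As th ths ph \<longleftrightarrow>
     (\<forall>j\<in>{1..d}. ph j \<noteq> 0) \<and>
     (\<exists>h. alg_iso d h \<and> h A = lower_bidiag d th \<and> h As = upper_bidiag d ths ph)"

definition tau_star :: "(nat \<Rightarrow> 'a::field) \<Rightarrow> nat \<Rightarrow> 'a \<Rightarrow> 'a" where
  "tau_star ths i x = (\<Prod>h<i. x - ths h)"

definition eta_star :: "nat \<Rightarrow> (nat \<Rightarrow> 'a::field) \<Rightarrow> nat \<Rightarrow> 'a \<Rightarrow> 'a" where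
  "eta_star d ths i x = (\<Prod>h<i. x - ths (d - h))"

definition mtrace :: "'a::field mat \<Rightarrow> 'a" where
  "mtrace M = (\<Sum>i<dim_row M. M $$ (i, i))"

definition nu :: "('a::field mat) \<Rightarrow> 'a mat \<Rightarrow> 'a" where
  "nu E0 Es0 = inverse (mtrace (E0 * Es0))"

definition kk :: "nat \<Rightarrow> (nat \<Rightarrow> 'a::field mat) \<Rightarrow> (nat \<Rightarrow> 'a mat) \<Rightarrow> nat \<Rightarrow> 'a" where
  "kk d E Es i = nu (E 0) (Es 0) * mtrace (Es i * E 0)"

end

theory Submission
  imports Defs
begin

(* Each split sequence comes with a model of the Leonard system: an automorphism h of
   Mat_{d+1} sending A to a lower and A* to an upper bidiagonal matrix. In such a model every
   E*_j is the rank-one matrix R_j L_j^T / (L_j R_j) built from triangular right and left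
   eigenvectors of h A*, and since E_0 has rank one, E_0 M E_0 = tr(M E_0) E_0 lets one compute
   tr(M E_0) inside the model. Do this for c_j = tr(E*_j E_0) and T_j = tr(E*_{j+1} A E*_j E_0).
   In the model of the first split sequence h E_0 has row vector e_0^T, which expresses T_j
   through c_j; in the model of the second one h E_0 has column vector e_d, which expresses T_j
   through c_{j+1}. Eliminating T_j gives
     c_{j+1} tau*_{j+1}(theta*_{j+1}) eta*_{d-j-1}(theta*_{j+1}) phi_{j+1}
       = c_j tau*_j(theta*_j) eta*_{d-j}(theta*_j) varphi_{j+1},
   and k_i = c_i / c_0. *)

section \<open>Rank-one matrices and the trace\<close>

definition outer_prod :: "'a::field vec \<Rightarrow> 'a vec \<Rightarrow> 'a mat" where
  "outer_prod u w = mat (dim_vec u) (dim_vec w) (\<lambda>(r, c). u $ r * w $ c)"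

lemma outer_prod_carrier [simp]:
  "u \<in> carrier_vec n \<Longrightarrow> w \<in> carrier_vec m \<Longrightarrow> outer_prod u w \<in> carrier_mat n m"
  unfolding outer_prod_def by auto

lemma smult_smult_mat: "a \<cdot>\<^sub>m (b \<cdot>\<^sub>m A) = (a * b) \<cdot>\<^sub>m (A :: 'a::field mat)"
  by (auto intro!: eq_matI)

lemma smult_mat_mult_vec:
  fixes A :: "'a::field mat"
  assumes "A \<in> carrier_mat nr nc" "v \<in> carrier_vec nc"
  shows "(k \<cdot>\<^sub>m A) *\<^sub>v v = k \<cdot>\<^sub>v (A *\<^sub>v v)"
  using assms by (auto intro!: eq_vecI simp: scalar_prod_def sum_distrib_left ac_simps)

lemma outer_prod_mult_vec:
  assumes "u \<in> carrier_vec n" "w \<in> carrier_vec m" "v \<in> carrier_vec m"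
  shows "outer_prod u w *\<^sub>v v = (w \<bullet> v) \<cdot>\<^sub>v u"
  using assms by (auto simp: outer_prod_def scalar_prod_def sum_distrib_left ac_simps intro!: eq_vecI)

lemma mult_outer_prod:
  assumes "X \<in> carrier_mat m n" "u \<in> carrier_vec n"
  shows "X * outer_prod u w = outer_prod (X *\<^sub>v u) w"
  using assms by (auto simp: outer_prod_def scalar_prod_def sum_distrib_right intro!: eq_matI sum.cong)

lemma outer_prod_mult:
  assumes "Y \<in> carrier_mat n m" "w \<in> carrier_vec n"
  shows "outer_prod u w * Y = outer_prod u (Y\<^sup>T *\<^sub>v w)"
  using assms by (auto simp: outer_prod_def scalar_prod_def sum_distrib_left intro!: eq_matI sum.cong)

lemma outer_prod_sandwich:
  assumes M: "M \<in> carrier_mat n n" and u: "u \<in> carrier_vec n" and w: "w \<in> carrier_vec n"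
  shows "outer_prod u w * M * outer_prod u w = (w \<bullet> (M *\<^sub>v u)) \<cdot>\<^sub>m outer_prod u w"
proof -
  have OM: "outer_prod u w * M \<in> carrier_mat n n" using assms by (meson mult_carrier_mat outer_prod_carrier)
  have "outer_prod u w * M * outer_prod u w = outer_prod ((outer_prod u w * M) *\<^sub>v u) w"
    using OM u by (rule mult_outer_prod)
  also have "(outer_prod u w * M) *\<^sub>v u = outer_prod u w *\<^sub>v (M *\<^sub>v u)"
    using assms by (meson assoc_mult_mat_vec outer_prod_carrier)
  also have "\<dots> = (w \<bullet> (M *\<^sub>v u)) \<cdot>\<^sub>v u"
    using assms by (simp add: outer_prod_mult_vec[of _ n _ n])
  finally show ?thesis by (auto simp: outer_prod_def intro!: eq_matI)
qed

lemma mtrace_mult_comm: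
  assumes "X \<in> carrier_mat n m" "Y \<in> carrier_mat m n"
  shows "mtrace (X * Y) = mtrace (Y * X)"
proof -
  have "mtrace (X * Y) = (\<Sum>i<n. \<Sum>k<m. X $$ (i, k) * Y $$ (k, i))"
    using assms by (auto simp: mtrace_def scalar_prod_def atLeast0LessThan intro!: sum.cong)
  also have "\<dots> = (\<Sum>k<m. \<Sum>i<n. Y $$ (k, i) * X $$ (i, k))"
    by (subst sum.swap) (simp add: mult.commute)
  also have "\<dots> = mtrace (Y * X)"
    using assms by (auto simp: mtrace_def scalar_prod_def atLeast0LessThan intro!: sum.cong)
  finally show ?thesis .
qed

lemma mtrace_smult: "X \<in> carrier_mat n n \<Longrightarrow> mtrace (c \<cdot>\<^sub>m X) = c * mtrace X"
  by (simp add: mtrace_def sum_distrib_left)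

lemma mtrace_outer_prod:
  assumes "u \<in> carrier_vec n" "w \<in> carrier_vec n"
  shows "mtrace (outer_prod u w) = w \<bullet> u"
  using assms by (auto simp: mtrace_def outer_prod_def scalar_prod_def atLeast0LessThan mult.commute
      intro!: sum.cong)

lemma mult_unit_vec_eq_col:
  fixes E :: "'a::field mat"
  assumes "E \<in> carrier_mat m n" "l < n"
  shows "E *\<^sub>v unit_vec n l = col E l"
proof (rule eq_vecI)
  fix i assume "i < dim_vec (col E l)"
  then show "(E *\<^sub>v unit_vec n l) $ i = col E l $ i"
    using assms scalar_prod_right_unit[of l n "row E i"] by auto
qed (use assms in auto)

text \<open>Testing against the matrix unit U with E U E = (column l of E)(row k of E) identifies
  the factor as tr(M E).\<close>

lemma mtrace_mult_eq_sandwich_factor: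
  fixes E :: "'a::field mat"
  assumes E: "E \<in> carrier_mat n n" and E_nz: "E \<noteq> 0\<^sub>m n n"
    and sandwich: "\<And>M. M \<in> carrier_mat n n \<Longrightarrow> \<exists>s. E * M * E = s \<cdot>\<^sub>m E"
    and M: "M \<in> carrier_mat n n" and s: "E * M * E = s \<cdot>\<^sub>m E"
  shows "mtrace (M * E) = s"
proof -
  obtain k l where kl: "k < n" "l < n" "E $$ (k, l) \<noteq> 0"
    using E_nz E by (metis carrier_matD(1,2) eq_matI index_zero_mat(1,2,3))
  define U :: "'a mat" where "U = outer_prod (unit_vec n l) (unit_vec n k)"
  have U: "U \<in> carrier_mat n n" unfolding U_def by auto
  have EUE: "E * U * E = outer_prod (col E l) (row E k)"
    using E kl unfolding U_def
    by (simp add: mult_outer_prod[of _ n n] outer_prod_mult[of _ n] mult_unit_vec_eq_col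
        flip: mult_unit_vec_eq_col[of "E\<^sup>T" n n k])
  obtain s' where s': "E * U * E = s' \<cdot>\<^sub>m E" using sandwich U by blast
  have "s' * E $$ (k, l) = E $$ (k, l) * E $$ (k, l)"
    using arg_cong[OF s'[unfolded EUE], of "\<lambda>X. X $$ (k, l)"] E kl by (auto simp: outer_prod_def)
  then have s'_eq: "s' = E $$ (k, l)" using kl by simp
  have "s' * mtrace (M * E) = mtrace (M * (E * U * E))"
    using M E U by (simp add: s' mult_smult_distrib[of _ n n] mtrace_smult[of "M * E" n])
  also have "\<dots> = row E k \<bullet> (M *\<^sub>v col E l)"
    using M E kl by (simp add: EUE mult_outer_prod[of _ n n] mtrace_outer_prod[of _ n])
  also have "\<dots> = (E * (M * E)) $$ (k, l)"
    unfolding col_mult2[OF M E kl(2), symmetric] using M E kl by simp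
  also have "\<dots> = (E * M * E) $$ (k, l)"
    using M E by (simp add: assoc_mult_mat[of E n n M n E n])
  also have "\<dots> = s * E $$ (k, l)" using s E kl by simp
  finally show ?thesis using s'_eq kl by simp
qed

section \<open>Primitive idempotents\<close>

lemma linear_factors_carrier:
  "B \<in> carrier_mat n n \<Longrightarrow>
    foldr (\<lambda>j M. (c j \<cdot>\<^sub>m (B - t j \<cdot>\<^sub>m 1\<^sub>m n)) * M) xs (1\<^sub>m n) \<in> carrier_mat n n"
  by (induction xs) auto

lemma shifted_mult_eigvec:
  fixes B :: "'a::field mat"
  assumes B: "B \<in> carrier_mat n n" and v: "v \<in> carrier_vec n" and eig: "B *\<^sub>v v = x \<cdot>\<^sub>v v"
  shows "(c \<cdot>\<^sub>m (B - t \<cdot>\<^sub>m 1\<^sub>m n)) *\<^sub>v v = (c * (x - t)) \<cdot>\<^sub>v v"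
proof -
  have "(B - t \<cdot>\<^sub>m 1\<^sub>m n) *\<^sub>v v = B *\<^sub>v v - (t \<cdot>\<^sub>m 1\<^sub>m n) *\<^sub>v v"
    using B v by (intro minus_mult_distrib_mat_vec) auto
  also have "(t \<cdot>\<^sub>m 1\<^sub>m n) *\<^sub>v v = t \<cdot>\<^sub>v v"
    using v by (simp add: smult_mat_mult_vec[of _ n n])
  finally have "(B - t \<cdot>\<^sub>m 1\<^sub>m n) *\<^sub>v v = (x - t) \<cdot>\<^sub>v v"
    using eig v by (auto intro!: eq_vecI simp: algebra_simps)
  moreover have "B - t \<cdot>\<^sub>m 1\<^sub>m n \<in> carrier_mat n n" using B by (intro minus_carrier_mat) auto
  ultimately show ?thesis using v by (simp add: smult_mat_mult_vec[of _ n n] smult_smult_assoc)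
qed

lemma linear_factors_mult_eigvec:
  fixes B :: "'a::field mat"
  assumes B: "B \<in> carrier_mat n n" and v: "v \<in> carrier_vec n" and eig: "B *\<^sub>v v = x \<cdot>\<^sub>v v"
  shows "foldr (\<lambda>j M. (c j \<cdot>\<^sub>m (B - t j \<cdot>\<^sub>m 1\<^sub>m n)) * M) xs (1\<^sub>m n) *\<^sub>v v
    = (\<Prod>j\<leftarrow>xs. c j * (x - t j)) \<cdot>\<^sub>v v"
proof (induction xs)
  case Nil
  then show ?case using v by auto
next
  case (Cons j xs)
  let ?F = "c j \<cdot>\<^sub>m (B - t j \<cdot>\<^sub>m 1\<^sub>m n)"
  let ?R = "foldr (\<lambda>j M. (c j \<cdot>\<^sub>m (B - t j \<cdot>\<^sub>m 1\<^sub>m n)) * M) xs (1\<^sub>m n)"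
  have F: "?F \<in> carrier_mat n n" using B by auto
  have R: "?R \<in> carrier_mat n n" using B by (rule linear_factors_carrier)
  have F_v: "?F *\<^sub>v v = (c j * (x - t j)) \<cdot>\<^sub>v v" using B v eig by (rule shifted_mult_eigvec)
  have "(?F * ?R) *\<^sub>v v = ?F *\<^sub>v (?R *\<^sub>v v)" using F R v by (rule assoc_mult_mat_vec)
  also have "\<dots> = (\<Prod>j\<leftarrow>xs. c j * (x - t j)) \<cdot>\<^sub>v (?F *\<^sub>v v)"
    using Cons F v by (simp add: mult_mat_vec)
  finally show ?case by (simp add: F_v smult_smult_assoc mult.commute)
qed

lemma prim_idem_carrier:
  "B \<in> carrier_mat (Suc d) (Suc d) \<Longrightarrow> prim_idem d th B i \<in> carrier_mat (Suc d) (Suc d)"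
  unfolding prim_idem_def by (rule linear_factors_carrier)

lemma lagrange_factors_at_node:
  fixes th :: "nat \<Rightarrow> 'a::field"
  assumes inj: "inj_on th {..d}" and k: "k \<le> d" and i: "i \<le> d"
  shows "(\<Prod>j\<leftarrow>filter (\<lambda>j. j \<noteq> i) [0..<Suc d]. 1 / (th i - th j) * (th k - th j))
    = (if k = i then 1 else 0)"
proof -
  have nodes: "set (filter (\<lambda>j. j \<noteq> i) [0..<Suc d]) = {..d} - {i}" by auto
  have "(\<Prod>j\<leftarrow>filter (\<lambda>j. j \<noteq> i) [0..<Suc d]. 1 / (th i - th j) * (th k - th j))
      = (\<Prod>j\<in>{..d} - {i}. 1 / (th i - th j) * (th k - th j))"
    unfolding nodes[symmetric] by (subst prod.distinct_set_conv_list) auto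
  also have "\<dots> = (if k = i then 1 else 0)"
  proof (cases "k = i")
    case True
    have "th i \<noteq> th j" if "j \<in> {..d} - {i}" for j
      using inj i that by (auto dest: inj_onD)
    then show ?thesis using True by (simp add: prod.neutral)
  next
    case False
    have "(\<Prod>j\<in>{..d} - {i}. 1 / (th i - th j) * (th k - th j)) = 0"
      using False k by (intro prod_zero) (auto intro!: bexI[of _ k])
    with False show ?thesis by simp
  qed
  finally show ?thesis .
qed

lemma prim_idem_mult_eigvec:
  fixes B :: "'a::field mat"
  assumes "B \<in> carrier_mat (Suc d) (Suc d)" "v \<in> carrier_vec (Suc d)" "B *\<^sub>v v = th k \<cdot>\<^sub>v v"
    and "inj_on th {..d}" "k \<le> d" "i \<le> d"
  shows "prim_idem d th B i *\<^sub>v v = (if k = i then v else 0\<^sub>v (Suc d))"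
proof -
  have "prim_idem d th B i *\<^sub>v v
      = (\<Prod>j\<leftarrow>filter (\<lambda>j. j \<noteq> i) [0..<Suc d]. 1 / (th i - th j) * (th k - th j)) \<cdot>\<^sub>v v"
    unfolding prim_idem_def using assms(1-3) by (rule linear_factors_mult_eigvec)
  also have "(\<Prod>j\<leftarrow>filter (\<lambda>j. j \<noteq> i) [0..<Suc d]. 1 / (th i - th j) * (th k - th j))
      = (if k = i then 1 else 0)"
    using assms(4-6) by (rule lagrange_factors_at_node)
  finally show ?thesis using assms(2) by (auto intro!: eq_vecI)
qed

lemma mat_eq_if_mult_vec_eq_on_spanning:
  fixes P Q :: "'a::field mat"
  assumes P: "P \<in> carrier_mat m n" and Q: "Q \<in> carrier_mat m n"
    and u: "\<And>j. j \<in> J \<Longrightarrow> u j \<in> carrier_vec n"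
    and spanning: "\<And>v. v \<in> carrier_vec n \<Longrightarrow> \<forall>j\<in>J. v \<bullet> u j = 0 \<Longrightarrow> v = 0\<^sub>v n"
    and eq: "\<And>j. j \<in> J \<Longrightarrow> P *\<^sub>v u j = Q *\<^sub>v u j"
  shows "P = Q"
proof (rule eq_matI)
  fix r c assume rc: "r < dim_row Q" "c < dim_col Q"
  have "row P r - row Q r = 0\<^sub>v n"
  proof (rule spanning)
    show "row P r - row Q r \<in> carrier_vec n" using P Q rc by auto
    have "(row P r - row Q r) \<bullet> u j = (P *\<^sub>v u j) $ r - (Q *\<^sub>v u j) $ r" if "j \<in> J" for j
      using P Q rc u[OF that] by (auto simp: minus_scalar_prod_distrib[of _ n])
    then show "\<forall>j\<in>J. (row P r - row Q r) \<bullet> u j = 0" using eq by simp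
  qed
  then have "(row P r - row Q r) $ c = 0" using Q rc by simp
  then show "P $$ (r, c) = Q $$ (r, c)" using P Q rc by simp
qed (use P Q in auto)

text \<open>The eigenbasis u may list the eigenvalues in an order ev different from th.\<close>

lemma prim_idem_eq_outer_prod:
  fixes B :: "'a::field mat"
  assumes B: "B \<in> carrier_mat (Suc d) (Suc d)" and inj_th: "inj_on th {..d}" and i: "i \<le> d"
    and u: "\<And>j. j \<le> d \<Longrightarrow> u j \<in> carrier_vec (Suc d)"
    and u_eig: "\<And>j. j \<le> d \<Longrightarrow> B *\<^sub>v u j = ev j \<cdot>\<^sub>v u j"
    and inj_ev: "inj_on ev {..d}" and ev_th: "ev ` {..d} \<subseteq> th ` {..d}"
    and spanning: "\<And>v. v \<in> carrier_vec (Suc d) \<Longrightarrow> \<forall>j\<le>d. v \<bullet> u j = 0 \<Longrightarrow> v = 0\<^sub>v (Suc d)"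
    and i0: "i0 \<le> d" "ev i0 = th i"
    and w: "w \<in> carrier_vec (Suc d)" "B\<^sup>T *\<^sub>v w = th i \<cdot>\<^sub>v w" "w \<bullet> u i0 \<noteq> 0"
  shows "prim_idem d th B i = (1 / (w \<bullet> u i0)) \<cdot>\<^sub>m outer_prod (u i0) w"
proof (rule mat_eq_if_mult_vec_eq_on_spanning[where J = "{..d}"])
  show "prim_idem d th B i \<in> carrier_mat (Suc d) (Suc d)" using B by (rule prim_idem_carrier)
  show "(1 / (w \<bullet> u i0)) \<cdot>\<^sub>m outer_prod (u i0) w \<in> carrier_mat (Suc d) (Suc d)"
    using u[OF i0(1)] w(1) by simp
  show "\<And>j. j \<in> {..d} \<Longrightarrow> u j \<in> carrier_vec (Suc d)" using u by simp
  show "\<And>v. v \<in> carrier_vec (Suc d) \<Longrightarrow> \<forall>j\<in>{..d}. v \<bullet> u j = 0 \<Longrightarrow> v = 0\<^sub>v (Suc d)"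
    using spanning by simp
  fix j assume "j \<in> {..d}"
  then have j: "j \<le> d" by simp
  then have "ev j \<in> th ` {..d}" using ev_th by blast
  then obtain k where k: "k \<le> d" "ev j = th k" by auto
  have k_i: "k = i \<longleftrightarrow> j = i0"
    using inj_onD[OF inj_ev, of j i0] inj_onD[OF inj_th, of k i] i0 j k i by auto
  have "th i * (w \<bullet> u j) = ev j * (w \<bullet> u j)"
    using transpose_vec_mult_scalar[OF B u[OF j] w(1)] w u[OF j] u_eig[OF j] by simp
  then have w_u: "j \<noteq> i0 \<Longrightarrow> w \<bullet> u j = 0"
    using inj_onD[OF inj_ev, of j i0] i0 j by auto
  have P_u: "prim_idem d th B i *\<^sub>v u j = (if k = i then u j else 0\<^sub>v (Suc d))"
    using prim_idem_mult_eigvec[OF B u[OF j] _ inj_th k(1) i] u_eig[OF j] k by simp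
  have Q_u: "((1 / (w \<bullet> u i0)) \<cdot>\<^sub>m outer_prod (u i0) w) *\<^sub>v u j = ((w \<bullet> u j) / (w \<bullet> u i0)) \<cdot>\<^sub>v u i0"
    using u[OF i0(1)] u[OF j] w
    by (simp add: smult_mat_mult_vec[of _ "Suc d" "Suc d"] outer_prod_mult_vec smult_smult_assoc)
  show "prim_idem d th B i *\<^sub>v u j = ((1 / (w \<bullet> u i0)) \<cdot>\<^sub>m outer_prod (u i0) w) *\<^sub>v u j"
  proof (cases "j = i0")
    case True
    then show ?thesis using P_u Q_u k_i w(3) by simp
  next
    case False
    then show ?thesis using P_u Q_u k_i w_u u[OF i0(1)] by auto
  qed
qed

section \<open>Algebra automorphisms\<close>

context
  fixes d :: nat and h :: "'a::field mat \<Rightarrow> 'a mat"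
  assumes h: "alg_iso d h"
begin

lemma alg_iso_carrier: "X \<in> carrier_mat (Suc d) (Suc d) \<Longrightarrow> h X \<in> carrier_mat (Suc d) (Suc d)"
  using h unfolding alg_iso_def bij_betw_def by auto

lemma alg_iso_mult:
  "X \<in> carrier_mat (Suc d) (Suc d) \<Longrightarrow> Y \<in> carrier_mat (Suc d) (Suc d) \<Longrightarrow> h (X * Y) = h X * h Y"
  using h unfolding alg_iso_def by auto

lemma alg_iso_add:
  "X \<in> carrier_mat (Suc d) (Suc d) \<Longrightarrow> Y \<in> carrier_mat (Suc d) (Suc d) \<Longrightarrow> h (X + Y) = h X + h Y"
  using h unfolding alg_iso_def by auto

lemma alg_iso_smult: "X \<in> carrier_mat (Suc d) (Suc d) \<Longrightarrow> h (c \<cdot>\<^sub>m X) = c \<cdot>\<^sub>m h X"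
  using h unfolding alg_iso_def by auto

lemma alg_iso_one: "h (1\<^sub>m (Suc d)) = 1\<^sub>m (Suc d)"
  using h unfolding alg_iso_def by auto

lemma alg_iso_inj:
  "X \<in> carrier_mat (Suc d) (Suc d) \<Longrightarrow> Y \<in> carrier_mat (Suc d) (Suc d) \<Longrightarrow> h X = h Y \<Longrightarrow> X = Y"
  using h unfolding alg_iso_def bij_betw_def by (auto dest: inj_onD)

lemma alg_iso_zero: "h (0\<^sub>m (Suc d) (Suc d)) = 0\<^sub>m (Suc d) (Suc d)"
proof -
  have "h (0\<^sub>m (Suc d) (Suc d)) = h (0 \<cdot>\<^sub>m 1\<^sub>m (Suc d))" by (auto intro!: arg_cong[where f = h] eq_matI)
  also have "\<dots> = 0\<^sub>m (Suc d) (Suc d)" by (auto simp: alg_iso_smult alg_iso_one intro!: eq_matI)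
  finally show ?thesis .
qed

lemma alg_iso_diff:
  assumes X: "X \<in> carrier_mat (Suc d) (Suc d)" and Y: "Y \<in> carrier_mat (Suc d) (Suc d)"
  shows "h (X - Y) = h X - h Y"
proof -
  have "X - Y = X + (-1) \<cdot>\<^sub>m Y" using X Y by (auto intro!: eq_matI)
  then have "h (X - Y) = h X + (-1) \<cdot>\<^sub>m h Y" using X Y by (simp add: alg_iso_add alg_iso_smult)
  also have "\<dots> = h X - h Y" using alg_iso_carrier[OF X] alg_iso_carrier[OF Y] by (auto intro!: eq_matI)
  finally show ?thesis .
qed

lemma alg_iso_linear_factors:
  assumes B: "B \<in> carrier_mat (Suc d) (Suc d)"
  shows "h (foldr (\<lambda>j M. (c j \<cdot>\<^sub>m (B - t j \<cdot>\<^sub>m 1\<^sub>m (Suc d))) * M) xs (1\<^sub>m (Suc d)))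
    = foldr (\<lambda>j M. (c j \<cdot>\<^sub>m (h B - t j \<cdot>\<^sub>m 1\<^sub>m (Suc d))) * M) xs (1\<^sub>m (Suc d))"
proof (induction xs)
  case Nil
  then show ?case by (simp add: alg_iso_one)
next
  case (Cons j xs)
  have "B - t j \<cdot>\<^sub>m 1\<^sub>m (Suc d) \<in> carrier_mat (Suc d) (Suc d)" using B by (intro minus_carrier_mat) auto
  then have "h (c j \<cdot>\<^sub>m (B - t j \<cdot>\<^sub>m 1\<^sub>m (Suc d))) = c j \<cdot>\<^sub>m (h B - t j \<cdot>\<^sub>m 1\<^sub>m (Suc d))"
    and "c j \<cdot>\<^sub>m (B - t j \<cdot>\<^sub>m 1\<^sub>m (Suc d)) \<in> carrier_mat (Suc d) (Suc d)"
    using B by (simp_all add: alg_iso_smult alg_iso_diff alg_iso_one)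
  then show ?case
    using Cons linear_factors_carrier[OF B, of c t xs] by (simp add: alg_iso_mult)
qed

lemma alg_iso_prim_idem:
  "B \<in> carrier_mat (Suc d) (Suc d) \<Longrightarrow> h (prim_idem d th B i) = prim_idem d th (h B) i"
  unfolding prim_idem_def by (rule alg_iso_linear_factors)

lemma alg_iso_sandwich_rank_one:
  assumes E: "E \<in> carrier_mat (Suc d) (Suc d)" and M: "M \<in> carrier_mat (Suc d) (Suc d)"
    and u: "u \<in> carrier_vec (Suc d)" and w: "w \<in> carrier_vec (Suc d)"
    and hE: "h E = c \<cdot>\<^sub>m outer_prod u w"
  shows "E * M * E = (c * (w \<bullet> (h M *\<^sub>v u))) \<cdot>\<^sub>m E"
proof (rule alg_iso_inj)
  let ?O = "outer_prod u w"
  have O: "?O \<in> carrier_mat (Suc d) (Suc d)" using u w by simp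
  have hM: "h M \<in> carrier_mat (Suc d) (Suc d)" using M by (rule alg_iso_carrier)
  have "h (E * M * E) = (c \<cdot>\<^sub>m ?O) * h M * (c \<cdot>\<^sub>m ?O)"
    using E M hE by (simp add: alg_iso_mult del: assoc_mult_mat)
  also have "\<dots> = (c * c) \<cdot>\<^sub>m (?O * h M * ?O)"
    using O hM
    by (simp add: mult_smult_assoc_mat[of _ "Suc d" "Suc d"] mult_smult_distrib[of _ "Suc d" "Suc d"]
        smult_smult_mat del: assoc_mult_mat)
  also have "\<dots> = h ((c * (w \<bullet> (h M *\<^sub>v u))) \<cdot>\<^sub>m E)"
    using E hM u w hE by (simp add: outer_prod_sandwich alg_iso_smult smult_smult_mat ac_simps)
  finally show "h (E * M * E) = h ((c * (w \<bullet> (h M *\<^sub>v u))) \<cdot>\<^sub>m E)" .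
qed (use E M in auto)

text \<open>The trace is recovered from the sandwich identity E M E = tr(M E) E, which h transports.\<close>

lemma alg_iso_mtrace_rank_one:
  assumes E: "E \<in> carrier_mat (Suc d) (Suc d)"
    and u: "u \<in> carrier_vec (Suc d)" and w: "w \<in> carrier_vec (Suc d)" and wu: "w \<bullet> u \<noteq> 0"
    and hE: "h E = (1 / (w \<bullet> u)) \<cdot>\<^sub>m outer_prod u w"
    and M: "M \<in> carrier_mat (Suc d) (Suc d)"
  shows "mtrace (M * E) = (w \<bullet> (h M *\<^sub>v u)) / (w \<bullet> u)"
proof (rule mtrace_mult_eq_sandwich_factor[OF E _ _ M])
  show "E * M * E = ((w \<bullet> (h M *\<^sub>v u)) / (w \<bullet> u)) \<cdot>\<^sub>m E"
    using alg_iso_sandwich_rank_one[OF E M u w hE] by simp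
  show "\<And>M'. M' \<in> carrier_mat (Suc d) (Suc d) \<Longrightarrow> \<exists>s. E * M' * E = s \<cdot>\<^sub>m E"
    using alg_iso_sandwich_rank_one[OF E _ u w hE] by blast
  have "mtrace (h E) = 1" using u w wu by (simp add: hE mtrace_smult[of _ "Suc d"] mtrace_outer_prod)
  then show "E \<noteq> 0\<^sub>m (Suc d) (Suc d)" by (auto simp: alg_iso_zero mtrace_def)
qed

end

section \<open>Eigenvectors of bidiagonal matrices\<close>

text \<open>Right and left eigenvectors of upper_bidiag d a b for the eigenvalue a j; the left ones
  for b = 1 are right eigenvectors of lower_bidiag d a, its transpose.\<close>

definition upper_bidiag_eigvec :: "nat \<Rightarrow> (nat \<Rightarrow> 'a::field) \<Rightarrow> (nat \<Rightarrow> 'a) \<Rightarrow> nat \<Rightarrow> 'a vec" where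
  "upper_bidiag_eigvec d a b j = vec (Suc d) (\<lambda>k. (\<Prod>h<k. a j - a h) / (\<Prod>m\<in>{1..k}. b m))"

definition upper_bidiag_left_eigvec :: "nat \<Rightarrow> (nat \<Rightarrow> 'a::field) \<Rightarrow> (nat \<Rightarrow> 'a) \<Rightarrow> nat \<Rightarrow> 'a vec" where
  "upper_bidiag_left_eigvec d a b j =
     vec (Suc d) (\<lambda>k. (\<Prod>m\<in>{Suc k..d}. a j - a m) * (\<Prod>m\<in>{Suc j..k}. b m))"

lemma dim_upper_bidiag_eigvec [simp]: "dim_vec (upper_bidiag_eigvec d a b j) = Suc d"
  by (simp add: upper_bidiag_eigvec_def)

lemma dim_upper_bidiag_left_eigvec [simp]: "dim_vec (upper_bidiag_left_eigvec d a b j) = Suc d"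
  by (simp add: upper_bidiag_left_eigvec_def)

lemma upper_bidiag_eigvec_carrier [simp]: "upper_bidiag_eigvec d a b j \<in> carrier_vec (Suc d)"
  by (simp add: upper_bidiag_eigvec_def)

lemma upper_bidiag_left_eigvec_carrier [simp]: "upper_bidiag_left_eigvec d a b j \<in> carrier_vec (Suc d)"
  by (simp add: upper_bidiag_left_eigvec_def)

lemma upper_bidiag_eigvec_index:
  "k \<le> d \<Longrightarrow> upper_bidiag_eigvec d a b j $ k = (\<Prod>h<k. a j - a h) / (\<Prod>m\<in>{1..k}. b m)"
  by (simp add: upper_bidiag_eigvec_def)

lemma upper_bidiag_left_eigvec_index:
  "k \<le> d \<Longrightarrow>
    upper_bidiag_left_eigvec d a b j $ k = (\<Prod>m\<in>{Suc k..d}. a j - a m) * (\<Prod>m\<in>{Suc j..k}. b m)"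
  by (simp add: upper_bidiag_left_eigvec_def)

lemma upper_bidiag_eigvec_eq_0:
  assumes "j < k" "k \<le> d"
  shows "upper_bidiag_eigvec d a b j $ k = 0"
proof -
  have "(\<Prod>h<k. a j - a h) = 0" using assms by (intro prod_zero) (auto intro!: bexI[of _ j])
  then show ?thesis using assms by (simp add: upper_bidiag_eigvec_index)
qed

lemma upper_bidiag_left_eigvec_eq_0:
  assumes "k < j" "j \<le> d"
  shows "upper_bidiag_left_eigvec d a b j $ k = 0"
proof -
  have "(\<Prod>m\<in>{Suc k..d}. a j - a m) = 0" using assms by (intro prod_zero) (auto intro!: bexI[of _ j])
  then show ?thesis using assms by (simp add: upper_bidiag_left_eigvec_index)
qed

lemma upper_bidiag_eigvec_at_0: "upper_bidiag_eigvec d a b j $ 0 = 1"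
  by (simp add: upper_bidiag_eigvec_index)

lemma upper_bidiag_left_eigvec_at_last:
  "j \<le> d \<Longrightarrow> upper_bidiag_left_eigvec d a b j $ d = (\<Prod>m\<in>{Suc j..d}. b m)"
  by (simp add: upper_bidiag_left_eigvec_index)

lemma upper_bidiag_eigvec_first: "upper_bidiag_eigvec d a b 0 = unit_vec (Suc d) 0"
  by (rule eq_vecI) (auto simp: upper_bidiag_eigvec_at_0 upper_bidiag_eigvec_eq_0)

lemma upper_bidiag_left_eigvec_last: "upper_bidiag_left_eigvec d a b d = unit_vec (Suc d) d"
  by (rule eq_vecI) (auto simp: upper_bidiag_left_eigvec_at_last upper_bidiag_left_eigvec_eq_0)

lemma eta_star_eq_prod:
  assumes "j \<le> d"
  shows "eta_star d a (d - j) x = (\<Prod>m\<in>{Suc j..d}. x - a m)"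
  unfolding eta_star_def
  by (rule prod.reindex_bij_witness[where i = "\<lambda>m. d - m" and j = "\<lambda>h. d - h"]) (use assms in auto)

lemma upper_bidiag_eigvec_diag:
  "j \<le> d \<Longrightarrow> upper_bidiag_eigvec d a b j $ j = tau_star a j (a j) / (\<Prod>m\<in>{1..j}. b m)"
  by (simp add: upper_bidiag_eigvec_index tau_star_def)

lemma upper_bidiag_left_eigvec_diag:
  "j \<le> d \<Longrightarrow> upper_bidiag_left_eigvec d a b j $ j = eta_star d a (d - j) (a j)"
  by (simp add: upper_bidiag_left_eigvec_index eta_star_eq_prod)

lemma tau_star_self_nonzero:
  "inj_on a {..d} \<Longrightarrow> j \<le> d \<Longrightarrow> tau_star a j (a j) \<noteq> 0"
  by (auto simp: tau_star_def prod_zero_iff dest: inj_onD)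

lemma eta_star_self_nonzero:
  "inj_on a {..d} \<Longrightarrow> j \<le> d \<Longrightarrow> eta_star d a (d - j) (a j) \<noteq> 0"
  by (auto simp: eta_star_eq_prod prod_zero_iff dest: inj_onD)

lemma upper_bidiag_eigvec_diag_nonzero:
  assumes "inj_on a {..d}" "\<forall>m\<in>{1..d}. b m \<noteq> 0" "j \<le> d"
  shows "upper_bidiag_eigvec d a b j $ j \<noteq> 0"
  using assms tau_star_self_nonzero[OF assms(1,3)] by (auto simp: upper_bidiag_eigvec_diag prod_zero_iff)

lemma upper_bidiag_left_eigvec_diag_nonzero:
  "inj_on a {..d} \<Longrightarrow> j \<le> d \<Longrightarrow> upper_bidiag_left_eigvec d a b j $ j \<noteq> 0"
  by (simp add: upper_bidiag_left_eigvec_diag eta_star_self_nonzero)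

lemma upper_bidiag_eigvec_Suc:
  assumes "k < d" "b (Suc k) \<noteq> 0"
  shows "b (Suc k) * upper_bidiag_eigvec d a b j $ Suc k = (a j - a k) * upper_bidiag_eigvec d a b j $ k"
  using assms by (simp add: upper_bidiag_eigvec_index prod.cl_ivl_Suc)

lemma upper_bidiag_left_eigvec_Suc:
  assumes k: "k < d" and j: "j \<le> d"
  shows "b (Suc k) * upper_bidiag_left_eigvec d a b j $ k
    = (a j - a (Suc k)) * upper_bidiag_left_eigvec d a b j $ Suc k"
proof (cases "j \<le> k")
  case True
  have "(\<Prod>m\<in>{Suc k..d}. a j - a m) = (a j - a (Suc k)) * (\<Prod>m\<in>{Suc (Suc k)..d}. a j - a m)"
    using k by (simp add: prod.atLeast_Suc_atMost)
  moreover have "(\<Prod>m\<in>{Suc j..Suc k}. b m) = (\<Prod>m\<in>{Suc j..k}. b m) * b (Suc k)"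
    using True by (simp add: prod.cl_ivl_Suc)
  ultimately show ?thesis using k by (simp add: upper_bidiag_left_eigvec_index)
next
  case False
  then show ?thesis using j by (cases "Suc k = j") (auto simp: upper_bidiag_left_eigvec_eq_0)
qed

lemma upper_bidiag_mult_vec_index:
  fixes v :: "'a::field vec"
  assumes v: "v \<in> carrier_vec (Suc d)" and k: "k \<le> d"
  shows "(upper_bidiag d a b *\<^sub>v v) $ k = a k * v $ k + (if k < d then b (Suc k) * v $ Suc k else 0)"
proof -
  have "(upper_bidiag d a b *\<^sub>v v) $ k
      = (\<Sum>c\<in>{0..<Suc d}. (if k = c then a k else if c = k + 1 then b c else 0) * v $ c)"
    using v k by (auto simp: upper_bidiag_def scalar_prod_def intro!: sum.cong)
  also have "\<dots> = (\<Sum>c\<in>{0..<Suc d}. (if c = k then a k * v $ k else 0)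
      + (if c = Suc k then b (Suc k) * v $ Suc k else 0))"
    by (intro sum.cong) auto
  finally show ?thesis using k by (simp add: sum.distrib)
qed

lemma upper_bidiag_transpose_mult_vec_index:
  fixes v :: "'a::field vec"
  assumes v: "v \<in> carrier_vec (Suc d)" and k: "k \<le> d"
  shows "((upper_bidiag d a b)\<^sup>T *\<^sub>v v) $ k = a k * v $ k + (if 0 < k then b k * v $ (k - 1) else 0)"
proof -
  have "((upper_bidiag d a b)\<^sup>T *\<^sub>v v) $ k
      = (\<Sum>c\<in>{0..<Suc d}. (if c = k then a c else if k = c + 1 then b k else 0) * v $ c)"
    using v k by (auto simp: upper_bidiag_def scalar_prod_def intro!: sum.cong)
  also have "\<dots> = (\<Sum>c\<in>{0..<Suc d}. (if c = k then a k * v $ k else 0)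
      + (if c = k - 1 \<and> 0 < k then b k * v $ (k - 1) else 0))"
    by (intro sum.cong) auto
  also have "\<dots> = a k * v $ k + (if 0 < k then b k * v $ (k - 1) else 0)"
    using k by (simp add: sum.distrib) auto
  finally show ?thesis .
qed

lemma upper_bidiag_carrier [simp]: "upper_bidiag d a b \<in> carrier_mat (Suc d) (Suc d)"
  by (simp add: upper_bidiag_def)

lemma lower_bidiag_carrier [simp]: "lower_bidiag d a \<in> carrier_mat (Suc d) (Suc d)"
  by (simp add: lower_bidiag_def)

lemma lower_bidiag_eq_transpose: "lower_bidiag d a = (upper_bidiag d a (\<lambda>_. 1))\<^sup>T"
  by (auto simp: lower_bidiag_def upper_bidiag_def intro!: eq_matI)

lemma dim_upper_bidiag [simp]:
  "dim_row (upper_bidiag d a b) = Suc d" "dim_col (upper_bidiag d a b) = Suc d"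
  by (simp_all add: upper_bidiag_def)

lemma upper_bidiag_mult_eigvec:
  assumes b: "\<forall>m\<in>{1..d}. b m \<noteq> 0" and j: "j \<le> d"
  shows "upper_bidiag d a b *\<^sub>v upper_bidiag_eigvec d a b j = a j \<cdot>\<^sub>v upper_bidiag_eigvec d a b j"
proof (rule eq_vecI)
  fix k assume "k < dim_vec (a j \<cdot>\<^sub>v upper_bidiag_eigvec d a b j)"
  then have k: "k \<le> d" by simp
  show "(upper_bidiag d a b *\<^sub>v upper_bidiag_eigvec d a b j) $ k = (a j \<cdot>\<^sub>v upper_bidiag_eigvec d a b j) $ k"
  proof (cases "k < d")
    case True
    then show ?thesis
      using upper_bidiag_eigvec_Suc[OF True, of b a j] b k
      by (subst upper_bidiag_mult_vec_index) (simp_all add: algebra_simps)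
  next
    case False
    have "a d * upper_bidiag_eigvec d a b j $ d = a j * upper_bidiag_eigvec d a b j $ d"
      using j by (cases "j = d") (auto simp: upper_bidiag_eigvec_eq_0)
    then show ?thesis
      using False k upper_bidiag_mult_vec_index[of "upper_bidiag_eigvec d a b j" d k a b] by simp
  qed
qed simp

lemma upper_bidiag_transpose_mult_left_eigvec:
  assumes j: "j \<le> d"
  shows "(upper_bidiag d a b)\<^sup>T *\<^sub>v upper_bidiag_left_eigvec d a b j = a j \<cdot>\<^sub>v upper_bidiag_left_eigvec d a b j"
proof (rule eq_vecI)
  fix k assume "k < dim_vec (a j \<cdot>\<^sub>v upper_bidiag_left_eigvec d a b j)"
  then have k: "k \<le> d" by simp
  show "((upper_bidiag d a b)\<^sup>T *\<^sub>v upper_bidiag_left_eigvec d a b j) $ k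
      = (a j \<cdot>\<^sub>v upper_bidiag_left_eigvec d a b j) $ k"
  proof (cases k)
    case 0
    have "a 0 * upper_bidiag_left_eigvec d a b j $ 0 = a j * upper_bidiag_left_eigvec d a b j $ 0"
      using j by (cases "j = 0") (auto simp: upper_bidiag_left_eigvec_eq_0)
    then show ?thesis
      using 0 upper_bidiag_transpose_mult_vec_index[of "upper_bidiag_left_eigvec d a b j" d k a b] by simp
  next
    case (Suc k')
    then show ?thesis
      using upper_bidiag_left_eigvec_Suc[of k' d j b a] j k
      by (subst upper_bidiag_transpose_mult_vec_index) (simp_all add: algebra_simps)
  qed
qed simp

lemma scalar_prod_single_overlap:
  fixes x y :: "'a::field vec"
  assumes x: "x \<in> carrier_vec (Suc d)" and y: "y \<in> carrier_vec (Suc d)" and j: "j \<le> d"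
    and x0: "\<And>k. j < k \<Longrightarrow> k \<le> d \<Longrightarrow> x $ k = 0" and y0: "\<And>k. k < j \<Longrightarrow> y $ k = 0"
  shows "x \<bullet> y = x $ j * y $ j"
proof -
  have "x \<bullet> y = (\<Sum>k\<in>{0..<Suc d}. x $ k * y $ k)" using y by (simp add: scalar_prod_def)
  also have "\<dots> = (\<Sum>k\<in>{0..<Suc d}. if k = j then x $ j * y $ j else 0)"
  proof (intro sum.cong refl)
    fix k assume "k \<in> {0..<Suc d}"
    then show "x $ k * y $ k = (if k = j then x $ j * y $ j else 0)"
      using x0[of k] y0[of k] by (cases "k < j"; cases "j < k") auto
  qed
  finally show ?thesis using j by simp
qed

lemma scalar_prod_left_eigvec_eigvec:
  assumes "j \<le> d"
  shows "upper_bidiag_left_eigvec d a b j \<bullet> upper_bidiag_eigvec d a b j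
    = upper_bidiag_eigvec d a b j $ j * upper_bidiag_left_eigvec d a b j $ j"
  using scalar_prod_single_overlap[of "upper_bidiag_eigvec d a b j" d "upper_bidiag_left_eigvec d a b j" j] assms
  by (simp add: comm_scalar_prod[of _ "Suc d"] upper_bidiag_eigvec_eq_0 upper_bidiag_left_eigvec_eq_0)

lemma left_eigvec_lower_bidiag_mult_eigvec:
  assumes j: "j < d"
  shows "upper_bidiag_left_eigvec d a b (Suc j) \<bullet> (lower_bidiag d a' *\<^sub>v upper_bidiag_eigvec d a b j)
    = upper_bidiag_eigvec d a b j $ j * upper_bidiag_left_eigvec d a b (Suc j) $ Suc j"
proof -
  let ?x = "lower_bidiag d a' *\<^sub>v upper_bidiag_eigvec d a b j"
  have x: "?x $ k = a' k * upper_bidiag_eigvec d a b j $ k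
      + (if 0 < k then upper_bidiag_eigvec d a b j $ (k - 1) else 0)" if "k \<le> d" for k
    unfolding lower_bidiag_eq_transpose using that by (subst upper_bidiag_transpose_mult_vec_index) simp_all
  have "?x \<in> carrier_vec (Suc d)" by (simp add: mult_mat_vec_carrier[of _ "Suc d" "Suc d"])
  then have "upper_bidiag_left_eigvec d a b (Suc j) \<bullet> ?x = ?x \<bullet> upper_bidiag_left_eigvec d a b (Suc j)"
    by (simp add: comm_scalar_prod[of _ "Suc d"])
  also have "\<dots> = ?x $ Suc j * upper_bidiag_left_eigvec d a b (Suc j) $ Suc j"
    using \<open>?x \<in> carrier_vec (Suc d)\<close> j
    by (intro scalar_prod_single_overlap)
      (auto simp: x upper_bidiag_eigvec_eq_0 upper_bidiag_left_eigvec_eq_0)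
  finally have "upper_bidiag_left_eigvec d a b (Suc j) \<bullet> ?x
      = ?x $ Suc j * upper_bidiag_left_eigvec d a b (Suc j) $ Suc j" .
  then show ?thesis using j x[of "Suc j"] by (simp add: upper_bidiag_eigvec_eq_0)
qed

lemma orthogonal_upper_triangular_family:
  fixes u :: "nat \<Rightarrow> 'a::field vec"
  assumes u: "\<And>j. j \<le> d \<Longrightarrow> u j \<in> carrier_vec (Suc d)"
    and u0: "\<And>j k. j < k \<Longrightarrow> k \<le> d \<Longrightarrow> u j $ k = 0"
    and diag: "\<And>j. j \<le> d \<Longrightarrow> u j $ j \<noteq> 0"
    and v: "v \<in> carrier_vec (Suc d)" and orth: "\<forall>j\<le>d. v \<bullet> u j = 0"
  shows "v = 0\<^sub>v (Suc d)"
proof -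
  have "v $ k = 0" if "k \<le> d" for k
    using that
  proof (induction k rule: less_induct)
    case (less k)
    have "u k \<bullet> v = u k $ k * v $ k"
      using less by (intro scalar_prod_single_overlap[OF u v]) (auto intro: u0)
    then show ?case using orth less.prems diag[OF less.prems] comm_scalar_prod[OF v u] by simp
  qed
  then show ?thesis using v by (intro eq_vecI) auto
qed

lemma orthogonal_lower_triangular_family:
  fixes u :: "nat \<Rightarrow> 'a::field vec"
  assumes u: "\<And>j. j \<le> d \<Longrightarrow> u j \<in> carrier_vec (Suc d)"
    and u0: "\<And>j k. k < j \<Longrightarrow> j \<le> d \<Longrightarrow> u j $ k = 0"
    and diag: "\<And>j. j \<le> d \<Longrightarrow> u j $ j \<noteq> 0"
    and v: "v \<in> carrier_vec (Suc d)" and orth: "\<forall>j\<le>d. v \<bullet> u j = 0"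
  shows "v = 0\<^sub>v (Suc d)"
proof -
  have "v $ k = 0" if "k \<le> d" for k
    using that
  proof (induction "d - k" arbitrary: k rule: less_induct)
    case less
    have "v \<bullet> u k = v $ k * u k $ k"
      using less by (intro scalar_prod_single_overlap[OF v u]) (auto intro: u0)
    then show ?case using orth less.prems diag[OF less.prems] by simp
  qed
  then show ?thesis using v by (intro eq_vecI) auto
qed

lemma scalar_prod_left_eigvec_eigvec_nonzero:
  assumes "inj_on a {..d}" "\<forall>m\<in>{1..d}. b m \<noteq> 0" "j \<le> d"
  shows "upper_bidiag_left_eigvec d a b j \<bullet> upper_bidiag_eigvec d a b j \<noteq> 0"
  using upper_bidiag_eigvec_diag_nonzero[OF assms] upper_bidiag_left_eigvec_diag_nonzero[OF assms(1,3)]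
  by (simp add: scalar_prod_left_eigvec_eigvec[OF assms(3)])

lemma prim_idem_upper_bidiag:
  fixes a b :: "nat \<Rightarrow> 'a::field"
  assumes inj: "inj_on a {..d}" and b: "\<forall>m\<in>{1..d}. b m \<noteq> 0" and j: "j \<le> d"
  shows "prim_idem d a (upper_bidiag d a b) j
    = (1 / (upper_bidiag_left_eigvec d a b j \<bullet> upper_bidiag_eigvec d a b j))
      \<cdot>\<^sub>m outer_prod (upper_bidiag_eigvec d a b j) (upper_bidiag_left_eigvec d a b j)"
proof (rule prim_idem_eq_outer_prod[where ev = a, OF _ inj j])
  show "\<And>v. v \<in> carrier_vec (Suc d) \<Longrightarrow> \<forall>k\<le>d. v \<bullet> upper_bidiag_eigvec d a b k = 0 \<Longrightarrow> v = 0\<^sub>v (Suc d)"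
    by (rule orthogonal_upper_triangular_family)
      (simp_all add: upper_bidiag_eigvec_eq_0 upper_bidiag_eigvec_diag_nonzero[OF inj b])
  show "upper_bidiag_left_eigvec d a b j \<bullet> upper_bidiag_eigvec d a b j \<noteq> 0"
    using inj b j by (rule scalar_prod_left_eigvec_eigvec_nonzero)
qed (use inj j b in \<open>simp_all add: upper_bidiag_mult_eigvec upper_bidiag_transpose_mult_left_eigvec\<close>)

lemma prim_idem_lower_bidiag:
  fixes a th :: "nat \<Rightarrow> 'a::field"
  assumes inj_th: "inj_on th {..d}" and inj: "inj_on a {..d}" and a_th: "a ` {..d} \<subseteq> th ` {..d}"
    and i: "i \<le> d" and i0: "i0 \<le> d" "a i0 = th i"
  shows "prim_idem d th (lower_bidiag d a) i
    = (1 / (upper_bidiag_eigvec d a (\<lambda>_. 1) i0 \<bullet> upper_bidiag_left_eigvec d a (\<lambda>_. 1) i0))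
      \<cdot>\<^sub>m outer_prod (upper_bidiag_left_eigvec d a (\<lambda>_. 1) i0) (upper_bidiag_eigvec d a (\<lambda>_. 1) i0)"
proof (rule prim_idem_eq_outer_prod[where ev = a, OF _ inj_th i _ _ inj a_th _ i0])
  have one: "\<forall>m\<in>{1..d}. (\<lambda>_. 1::'a) m \<noteq> 0" by simp
  show "\<And>v. v \<in> carrier_vec (Suc d) \<Longrightarrow> \<forall>k\<le>d. v \<bullet> upper_bidiag_left_eigvec d a (\<lambda>_. 1) k = 0
      \<Longrightarrow> v = 0\<^sub>v (Suc d)"
    by (rule orthogonal_lower_triangular_family)
      (simp_all add: upper_bidiag_left_eigvec_eq_0 upper_bidiag_left_eigvec_diag_nonzero[OF inj])
  show "(lower_bidiag d a)\<^sup>T *\<^sub>v upper_bidiag_eigvec d a (\<lambda>_. 1) i0 = th i \<cdot>\<^sub>v upper_bidiag_eigvec d a (\<lambda>_. 1) i0"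
    using upper_bidiag_mult_eigvec[OF one i0(1)] i0 by (simp add: lower_bidiag_eq_transpose)
  show "upper_bidiag_eigvec d a (\<lambda>_. 1) i0 \<bullet> upper_bidiag_left_eigvec d a (\<lambda>_. 1) i0 \<noteq> 0"
    using scalar_prod_left_eigvec_eigvec_nonzero[OF inj one i0(1)]
      comm_scalar_prod[of "upper_bidiag_eigvec d a (\<lambda>_. 1) i0" "Suc d" "upper_bidiag_left_eigvec d a (\<lambda>_. 1) i0"]
    by simp
qed (simp_all add: lower_bidiag_eq_transpose upper_bidiag_transpose_mult_left_eigvec)

section \<open>Traces in a split decomposition\<close>

locale split_model =
  fixes d :: nat and A As E0 :: "'a::field mat" and Es :: "nat \<Rightarrow> 'a mat"
    and h :: "'a mat \<Rightarrow> 'a mat" and a ths p :: "nat \<Rightarrow> 'a" and u w :: "'a vec"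
  assumes A: "A \<in> carrier_mat (Suc d) (Suc d)" and As: "As \<in> carrier_mat (Suc d) (Suc d)"
    and E0: "E0 \<in> carrier_mat (Suc d) (Suc d)"
    and Es: "\<And>j. j \<le> d \<Longrightarrow> Es j = prim_idem d ths As j"
    and inj_ths: "inj_on ths {..d}" and p: "\<forall>j\<in>{1..d}. p j \<noteq> 0"
    and h: "alg_iso d h" and h_A: "h A = lower_bidiag d a" and h_As: "h As = upper_bidiag d ths p"
    and u: "u \<in> carrier_vec (Suc d)" and w: "w \<in> carrier_vec (Suc d)" and wu: "w \<bullet> u \<noteq> 0"
    and h_E0: "h E0 = (1 / (w \<bullet> u)) \<cdot>\<^sub>m outer_prod u w"
begin

abbreviation R :: "nat \<Rightarrow> 'a vec" where "R \<equiv> upper_bidiag_eigvec d ths p"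

abbreviation L :: "nat \<Rightarrow> 'a vec" where "L \<equiv> upper_bidiag_left_eigvec d ths p"

lemma Es_carrier: "j \<le> d \<Longrightarrow> Es j \<in> carrier_mat (Suc d) (Suc d)"
  using Es As prim_idem_carrier by metis

lemma h_Es_mult_vec:
  assumes j: "j \<le> d" and v: "v \<in> carrier_vec (Suc d)"
  shows "h (Es j) *\<^sub>v v = ((L j \<bullet> v) / (L j \<bullet> R j)) \<cdot>\<^sub>v R j"
proof -
  have "h (Es j) = (1 / (L j \<bullet> R j)) \<cdot>\<^sub>m outer_prod (R j) (L j)"
    using alg_iso_prim_idem[OF h As] h_As Es[OF j] prim_idem_upper_bidiag[OF inj_ths p j] by simp
  then show ?thesis
    using v by (simp add: smult_mat_mult_vec[of _ "Suc d" "Suc d"] outer_prod_mult_vec[of _ "Suc d" _ "Suc d"]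
        smult_smult_assoc)
qed

lemma mtrace_mult_E0: "M \<in> carrier_mat (Suc d) (Suc d) \<Longrightarrow> mtrace (M * E0) = (w \<bullet> (h M *\<^sub>v u)) / (w \<bullet> u)"
  using alg_iso_mtrace_rank_one[OF h E0 u w wu h_E0] .

lemma mtrace_Es_E0:
  assumes "j \<le> d"
  shows "mtrace (Es j * E0) = (L j \<bullet> u) / (L j \<bullet> R j) * ((w \<bullet> R j) / (w \<bullet> u))"
  using mtrace_mult_E0[OF Es_carrier[OF assms]] h_Es_mult_vec[OF assms u] w by simp

lemma mtrace_Es_A_Es_E0:
  assumes j: "j < d"
  shows "mtrace (Es (Suc j) * A * Es j * E0)
    = (L j \<bullet> u) / (L j \<bullet> R j) * (R j $ j / R (Suc j) $ Suc j) * ((w \<bullet> R (Suc j)) / (w \<bullet> u))"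
proof -
  let ?\<alpha> = "(L j \<bullet> u) / (L j \<bullet> R j)" and ?B = "lower_bidiag d a"
  have jd: "j \<le> d" "Suc j \<le> d" using j by auto
  have Es_j: "h (Es j) \<in> carrier_mat (Suc d) (Suc d)" and Es_Suc: "h (Es (Suc j)) \<in> carrier_mat (Suc d) (Suc d)"
    using alg_iso_carrier[OF h] Es_carrier jd by blast+
  have BR: "?B *\<^sub>v R j \<in> carrier_vec (Suc d)" by (simp add: mult_mat_vec_carrier[of _ "Suc d" "Suc d"])
  have "h (Es (Suc j) * A * Es j) = h (Es (Suc j)) * ?B * h (Es j)"
    using Es_carrier[OF jd(1)] Es_carrier[OF jd(2)] A h_A by (simp add: alg_iso_mult[OF h] del: assoc_mult_mat)
  then have "h (Es (Suc j) * A * Es j) *\<^sub>v u = h (Es (Suc j)) *\<^sub>v (?B *\<^sub>v (h (Es j) *\<^sub>v u))"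
    using Es_j Es_Suc u by (simp add: assoc_mult_mat_vec[of _ "Suc d" "Suc d" _ "Suc d"] del: assoc_mult_mat)
  also have "h (Es j) *\<^sub>v u = ?\<alpha> \<cdot>\<^sub>v R j" by (rule h_Es_mult_vec[OF jd(1) u])
  also have "h (Es (Suc j)) *\<^sub>v (?B *\<^sub>v (?\<alpha> \<cdot>\<^sub>v R j)) = ?\<alpha> \<cdot>\<^sub>v (h (Es (Suc j)) *\<^sub>v (?B *\<^sub>v R j))"
    using Es_Suc BR by (simp add: mult_mat_vec[of _ "Suc d" "Suc d"])
  also have "h (Es (Suc j)) *\<^sub>v (?B *\<^sub>v R j) = (R j $ j / R (Suc j) $ Suc j) \<cdot>\<^sub>v R (Suc j)"
    using h_Es_mult_vec[OF jd(2) BR] left_eigvec_lower_bidiag_mult_eigvec[OF j, of ths p a]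
      scalar_prod_left_eigvec_eigvec[OF jd(2), of ths p] upper_bidiag_left_eigvec_diag_nonzero[OF inj_ths jd(2), of p]
    by simp
  finally have "h (Es (Suc j) * A * Es j) *\<^sub>v u = (?\<alpha> * (R j $ j / R (Suc j) $ Suc j)) \<cdot>\<^sub>v R (Suc j)"
    by (simp add: smult_smult_assoc)
  moreover have "Es (Suc j) * A * Es j \<in> carrier_mat (Suc d) (Suc d)"
    using Es_carrier[OF jd(1)] Es_carrier[OF jd(2)] A by simp
  ultimately show ?thesis using mtrace_mult_E0 w by simp
qed

lemma mtrace_Es_A_Es_E0_if_w_unit:
  assumes w_unit: "w = unit_vec (Suc d) 0" and j: "j < d"
  shows "mtrace (Es (Suc j) * A * Es j * E0) * tau_star ths (Suc j) (ths (Suc j))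
    = mtrace (Es j * E0) * tau_star ths j (ths j) * p (Suc j)"
proof -
  have wR: "w \<bullet> R k = 1" for k using w_unit by (simp add: upper_bidiag_eigvec_at_0)
  have "(\<Prod>m\<in>{1..j}. p m) \<noteq> 0" "p (Suc j) \<noteq> 0" using p j by (auto simp: prod_zero_iff)
  moreover have "tau_star ths (Suc j) (ths (Suc j)) \<noteq> 0" using inj_ths j by (simp add: tau_star_self_nonzero)
  ultimately have ratio: "R j $ j / R (Suc j) $ Suc j * tau_star ths (Suc j) (ths (Suc j))
      = tau_star ths j (ths j) * p (Suc j)"
    using j by (simp add: upper_bidiag_eigvec_diag prod.cl_ivl_Suc)
  have "mtrace (Es (Suc j) * A * Es j * E0) * tau_star ths (Suc j) (ths (Suc j))
      = (L j \<bullet> u) / (L j \<bullet> R j) / (w \<bullet> u) * (R j $ j / R (Suc j) $ Suc j * tau_star ths (Suc j) (ths (Suc j)))"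
    using mtrace_Es_A_Es_E0[OF j] wR by (simp add: ac_simps)
  also have "\<dots> = mtrace (Es j * E0) * tau_star ths j (ths j) * p (Suc j)"
    unfolding ratio using mtrace_Es_E0[of j] j wR by simp
  finally show ?thesis .
qed

lemma mtrace_Es_A_Es_E0_if_u_unit:
  assumes u_unit: "u = unit_vec (Suc d) d" and j: "j < d"
  shows "mtrace (Es (Suc j) * A * Es j * E0) * eta_star d ths (d - j) (ths j)
    = mtrace (Es (Suc j) * E0) * eta_star d ths (d - Suc j) (ths (Suc j)) * p (Suc j)"
proof -
  have Lu: "L k \<bullet> u = (\<Prod>m\<in>{Suc k..d}. p m)" if "k \<le> d" for k
    using u_unit that by (simp add: upper_bidiag_left_eigvec_at_last)
  have LR: "L k \<bullet> R k = R k $ k * eta_star d ths (d - k) (ths k)" if "k \<le> d" for k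
    using that by (simp add: scalar_prod_left_eigvec_eigvec upper_bidiag_left_eigvec_diag)
  have "(\<Prod>m\<in>{Suc j..d}. p m) = p (Suc j) * (\<Prod>m\<in>{Suc (Suc j)..d}. p m)"
    using j by (simp add: prod.atLeast_Suc_atMost)
  moreover have "R k $ k \<noteq> 0" "eta_star d ths (d - k) (ths k) \<noteq> 0" if "k \<le> d" for k
    using that inj_ths p by (simp_all add: upper_bidiag_eigvec_diag_nonzero eta_star_self_nonzero)
  ultimately show ?thesis
    using mtrace_Es_A_Es_E0[OF j] mtrace_Es_E0[of "Suc j"] Lu LR j by (simp add: field_simps)
qed

lemma mtrace_Es0_E0_nonzero:
  assumes u_unit: "u = unit_vec (Suc d) d" and w0: "w $ 0 \<noteq> 0"
  shows "mtrace (Es 0 * E0) \<noteq> 0"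
proof -
  have "L 0 \<bullet> u \<noteq> 0" using u_unit p by (simp add: upper_bidiag_left_eigvec_at_last prod_zero_iff)
  moreover have "L 0 \<bullet> R 0 \<noteq> 0" using inj_ths p by (simp add: scalar_prod_left_eigvec_eigvec_nonzero)
  moreover have "w \<bullet> R 0 = w $ 0" using w by (simp add: upper_bidiag_eigvec_first)
  ultimately show ?thesis using mtrace_Es_E0[of 0] w0 wu by simp
qed

end

section \<open>Comparing the two split decompositions\<close>

lemma eig_ordering_reverse:
  assumes "eig_ordering d A th"
  shows "eig_ordering d A (\<lambda>i. th (d - i))"
proof -
  have "bij_betw (\<lambda>i. d - i) {..d} {..d}"
    by (rule bij_betw_byWitness[where f' = "\<lambda>i. d - i"]) auto
  then show ?thesis using assms unfolding eig_ordering_def by (auto dest: bij_betw_trans simp: comp_def)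
qed

lemma split_model_of_split_seq:
  assumes A: "A \<in> carrier_mat (Suc d) (Suc d)" and As: "As \<in> carrier_mat (Suc d) (Suc d)"
    and th: "eig_ordering d A th" and E0: "E0 = prim_idem d th A 0"
    and a: "eig_ordering d A a" and i0: "i0 \<le> d" "a i0 = th 0"
    and ths: "eig_ordering d As ths" and Es: "\<And>j. j \<le> d \<Longrightarrow> Es j = prim_idem d ths As j"
    and split: "split_seq d A As a ths p"
  obtains h where "split_model d A As E0 Es h a ths p
    (upper_bidiag_left_eigvec d a (\<lambda>_. 1) i0) (upper_bidiag_eigvec d a (\<lambda>_. 1) i0)"
proof -
  obtain h where h: "alg_iso d h" "h A = lower_bidiag d a" "h As = upper_bidiag d ths p"
    and p: "\<forall>j\<in>{1..d}. p j \<noteq> 0"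
    using split unfolding split_seq_def by auto
  have inj: "inj_on th {..d}" "inj_on a {..d}" "inj_on ths {..d}" and a_th: "a ` {..d} \<subseteq> th ` {..d}"
    using th a ths unfolding eig_ordering_def bij_betw_def by auto
  have one: "\<forall>m\<in>{1..d}. (\<lambda>_. 1::'a) m \<noteq> 0" by simp
  have "split_model d A As E0 Es h a ths p
    (upper_bidiag_left_eigvec d a (\<lambda>_. 1) i0) (upper_bidiag_eigvec d a (\<lambda>_. 1) i0)"
  proof
    show "h E0 = (1 / (upper_bidiag_eigvec d a (\<lambda>_. 1) i0 \<bullet> upper_bidiag_left_eigvec d a (\<lambda>_. 1) i0))
      \<cdot>\<^sub>m outer_prod (upper_bidiag_left_eigvec d a (\<lambda>_. 1) i0) (upper_bidiag_eigvec d a (\<lambda>_. 1) i0)"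
      using E0 alg_iso_prim_idem[OF h(1) A] h(2) prim_idem_lower_bidiag[OF inj(1,2) a_th le0 i0] by simp
    show "upper_bidiag_eigvec d a (\<lambda>_. 1) i0 \<bullet> upper_bidiag_left_eigvec d a (\<lambda>_. 1) i0 \<noteq> 0"
      using scalar_prod_left_eigvec_eigvec_nonzero[OF inj(2) one i0(1)]
        comm_scalar_prod[of "upper_bidiag_eigvec d a (\<lambda>_. 1) i0" "Suc d" "upper_bidiag_left_eigvec d a (\<lambda>_. 1) i0"]
      by simp
  qed (use A As E0 Es inj p h prim_idem_carrier in auto)
  then show thesis by (rule that)
qed

lemma prod_recurrence_closed_form:
  fixes g p q :: "nat \<Rightarrow> 'a::field"
  assumes rec: "\<And>j. j < n \<Longrightarrow> g j * p (Suc j) = g (Suc j) * q (Suc j)"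
    and q: "\<forall>j\<in>{1..n}. q j \<noteq> 0" and i: "i \<le> n"
  shows "g i = g 0 * (\<Prod>j\<in>{1..i}. p j) / (\<Prod>j\<in>{1..i}. q j)"
  using i
proof (induction i)
  case (Suc i)
  have "q (Suc i) \<noteq> 0" using q Suc.prems by auto
  then have "g (Suc i) = g i * p (Suc i) / q (Suc i)" using rec[of i] Suc.prems by (simp add: eq_divide_eq)
  then show ?case using Suc by (simp add: prod.cl_ivl_Suc)
qed simp

lemma mtrace_Es_E0_recurrence:
  assumes m1: "split_model d A As E0 Es h1 a1 ths p1 u1 (unit_vec (Suc d) 0)"
    and m2: "split_model d A As E0 Es h2 a2 ths p2 (unit_vec (Suc d) d) w2"
    and j: "j < d"
  shows "mtrace (Es j * E0) * (tau_star ths j (ths j) * eta_star d ths (d - j) (ths j)) * p1 (Suc j)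
    = mtrace (Es (Suc j) * E0) * (tau_star ths (Suc j) (ths (Suc j)) * eta_star d ths (d - Suc j) (ths (Suc j)))
      * p2 (Suc j)"
proof -
  let ?T = "mtrace (Es (Suc j) * A * Es j * E0)"
  have "mtrace (Es j * E0) * (tau_star ths j (ths j) * eta_star d ths (d - j) (ths j)) * p1 (Suc j)
      = ?T * tau_star ths (Suc j) (ths (Suc j)) * eta_star d ths (d - j) (ths j)"
    using split_model.mtrace_Es_A_Es_E0_if_w_unit[OF m1 refl j] by (simp add: ac_simps)
  also have "\<dots> = mtrace (Es (Suc j) * E0)
      * (tau_star ths (Suc j) (ths (Suc j)) * eta_star d ths (d - Suc j) (ths (Suc j))) * p2 (Suc j)"
    using split_model.mtrace_Es_A_Es_E0_if_u_unit[OF m2 refl j] by (simp add: ac_simps)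
  finally show ?thesis .
qed

lemma mtrace_Es_E0_closed_form:
  assumes m1: "split_model d A As E0 Es h1 a1 ths p1 u1 (unit_vec (Suc d) 0)"
    and m2: "split_model d A As E0 Es h2 a2 ths p2 (unit_vec (Suc d) d) w2"
    and i: "i \<le> d"
  shows "mtrace (Es i * E0) = mtrace (Es 0 * E0) * ((\<Prod>j\<in>{1..i}. p1 j) / (\<Prod>j\<in>{1..i}. p2 j)
    * (eta_star d ths d (ths 0) / (tau_star ths i (ths i) * eta_star d ths (d - i) (ths i))))"
proof -
  have p2: "\<forall>j\<in>{1..d}. p2 j \<noteq> 0" and inj_ths: "inj_on ths {..d}"
    using split_model.p[OF m2] split_model.inj_ths[OF m2] .
  have "mtrace (Es i * E0) * (tau_star ths i (ths i) * eta_star d ths (d - i) (ths i))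
      = mtrace (Es 0 * E0) * (tau_star ths 0 (ths 0) * eta_star d ths (d - 0) (ths 0))
        * (\<Prod>j\<in>{1..i}. p1 j) / (\<Prod>j\<in>{1..i}. p2 j)"
    using mtrace_Es_E0_recurrence[OF m1 m2] p2 i by (rule prod_recurrence_closed_form)
  moreover have "tau_star ths i (ths i) \<noteq> 0" "eta_star d ths (d - i) (ths i) \<noteq> 0"
    using inj_ths i by (simp_all add: tau_star_self_nonzero eta_star_self_nonzero)
  moreover have "tau_star ths 0 (ths 0) = 1" by (simp add: tau_star_def)
  moreover have "(\<Prod>j\<in>{1..i}. p2 j) \<noteq> 0" using p2 i by (auto simp: prod_zero_iff)
  ultimately show ?thesis by (simp add: field_simps)
qed

theorem theorem17p10:
  fixes d :: nat and A As :: "'a::field mat" and E Es :: "nat \<Rightarrow> 'a mat"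
    and th ths ph phi :: "nat \<Rightarrow> 'a"
  assumes LS: "leonard_system d A As E Es"
    and th: "eig_ordering d A th" "\<forall>i\<le>d. E i = prim_idem d th A i"
    and ths: "eig_ordering d As ths" "\<forall>i\<le>d. Es i = prim_idem d ths As i"
    and ph: "split_seq d A As th ths ph"
    and phi: "split_seq d A As (\<lambda>i. th (d - i)) ths phi"
    and i: "i \<le> d"
  shows "kk d E Es i =
    (\<Prod>j\<in>{1..i}. ph j) / (\<Prod>j\<in>{1..i}. phi j) *
    (eta_star d ths d (ths 0) / (tau_star ths i (ths i) * eta_star d ths (d - i) (ths i)))"
proof -
  have A: "A \<in> carrier_mat (Suc d) (Suc d)" and As: "As \<in> carrier_mat (Suc d) (Suc d)"
    using LS unfolding leonard_system_def mult_free_def by auto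
  have E0: "E 0 = prim_idem d th A 0" and Es: "\<And>j. j \<le> d \<Longrightarrow> Es j = prim_idem d ths As j"
    using th(2) ths(2) by auto
  obtain h1 where m1: "split_model d A As (E 0) Es h1 th ths ph
      (upper_bidiag_left_eigvec d th (\<lambda>_. 1) 0) (unit_vec (Suc d) 0)"
    using split_model_of_split_seq[OF A As th(1) E0 th(1) le0 refl ths(1) Es ph]
    by (metis upper_bidiag_eigvec_first)
  obtain h2 where m2: "split_model d A As (E 0) Es h2 (\<lambda>i. th (d - i)) ths phi
      (unit_vec (Suc d) d) (upper_bidiag_eigvec d (\<lambda>i. th (d - i)) (\<lambda>_. 1) d)"
    using split_model_of_split_seq[OF A As th(1) E0 eig_ordering_reverse[OF th(1)] order.refl _ ths(1) Es phi]
    by (metis diff_self_eq_0 upper_bidiag_left_eigvec_last)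
  have "mtrace (Es 0 * E 0) \<noteq> 0"
    using split_model.mtrace_Es0_E0_nonzero[OF m2 refl] by (simp add: upper_bidiag_eigvec_at_0)
  moreover have "mtrace (E 0 * Es 0) = mtrace (Es 0 * E 0)"
    using E0 Es[of 0] mtrace_mult_comm[OF prim_idem_carrier[OF A] prim_idem_carrier[OF As]] by simp
  ultimately show ?thesis
    using mtrace_Es_E0_closed_form[OF m1 m2 i] by (simp add: kk_def nu_def)
qed

end
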